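(* Let $q$ be a power of $2$ and let $\mathscr{C}$ be an $\mathbb{F}_q$-linear additive conjucyclic code of length $n$ over $\mathbb{F}_{q^2}$. Then its alternating dual $\mathscr{C}^{\perp_a}$ is also an $\mathbb{F}_q$-linear additive conjucyclic code.
   Context: An $\mathbb{F}_q$-linear additive code of length $n$ over $\mathbb{F}_{q^2}$ is an $\mathbb{F}_q$-subspace of $\mathbb{F}_{q^2}^n$; it is conjucyclic if closed under $T(c_0,\ldots,c_{n-1})=(c_{n-1}^q,c_0,\ldots,c_{n-2})$. Fix a primitive element $\beta$ of $\mathbb{F}_{q^2}$; the alternating inner product is $\langle u,v\rangle_a=(\beta^{2q}-\beta^2)\sum_{i=0}^{n-1}(u_iv_i^q-u_i^qv_i)$ and $\mathscr{C}^{\perp_a}=\{v\in\mathbb{F}_{q^2}^n:\langle u,v\rangle_a=0\ \forall u\in\mathscr{C}\}$. *)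

theory Defs
  imports Main
begin

text \<open>Ambient field: a finite field type 'a with CARD('a) = q^2 (this is F_{q^2}).
  F_q is the subfield {x. x^q = x}. Vectors of length n are lists of length n.\<close>

definition subfield_Fq :: "nat \<Rightarrow> 'a::field set" where
  "subfield_Fq q = {x. x ^ q = x}"

definition primitive_element :: "'a::field \<Rightarrow> bool" where
  "primitive_element \<beta> \<longleftrightarrow> (\<forall>x. x \<noteq> 0 \<longrightarrow> (\<exists>k::nat. x = \<beta> ^ k))"

definition Fq_linear_additive_code :: "nat \<Rightarrow> nat \<Rightarrow> 'a::field list set \<Rightarrow> bool" where
  "Fq_linear_additive_code q n C \<longleftrightarrow>
     C \<subseteq> {v. length v = n} \<and>
     replicate n 0 \<in> C \<and>
     (\<forall>u\<in>C. \<forall>v\<in>C. map2 (+) u v \<in> C) \<and>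
     (\<forall>a\<in>subfield_Fq q. \<forall>u\<in>C. map (\<lambda>x. a * x) u \<in> C)"

definition conj_shift :: "nat \<Rightarrow> 'a::field list \<Rightarrow> 'a list" where
  "conj_shift q c = (if c = [] then [] else (last c) ^ q # butlast c)"

definition conjucyclic :: "nat \<Rightarrow> 'a::field list set \<Rightarrow> bool" where
  "conjucyclic q C \<longleftrightarrow> (\<forall>c\<in>C. conj_shift q c \<in> C)"

definition alt_ip :: "nat \<Rightarrow> 'a::field \<Rightarrow> 'a list \<Rightarrow> 'a list \<Rightarrow> 'a" where
  "alt_ip q \<beta> u v =
     (\<beta> ^ (2 * q) - \<beta> ^ 2) * (\<Sum>i<length u. u ! i * (v ! i) ^ q - (u ! i) ^ q * v ! i)"

definition alt_dual :: "nat \<Rightarrow> 'a::field \<Rightarrow> nat \<Rightarrow> 'a list set \<Rightarrow> 'a list set" where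
  "alt_dual q \<beta> n C = {v. length v = n \<and> (\<forall>u\<in>C. alt_ip q \<beta> u v = 0)}"

end

theory Submission
  imports Defs "HOL-Number_Theory.Residues"
begin

(* The field has q^2 = 2^(2m) elements, so it has characteristic 2 and x^(q^2) = x.
   In characteristic 2 the map x \<mapsto> x^q is additive and fixes F_q, so <u, v>_a is
   F_q-linear in v and the alternating dual is an F_q-subspace. Moreover the conjugate
   shift T preserves the form: on the wrapped-around coordinate the term a b^q - a^q b
   becomes a^q b - a b^q, which is the same element since -1 = 1. As T is injective and
   C is finite, T(C) = C, so for u = T w in C we get <u, T v>_a = <w, v>_a = 0. *)

(* finite_field_power_card_eq_same is stated for the sort finite_field, of which
   'a::{field,finite} is not known to be an instance. *)
lemma power_card_eq_self:
  fixes x :: "'a::{field,finite}"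
  shows "x ^ card (UNIV :: 'a set) = x"
proof (cases "x = 0")
  case False
  let ?U = "UNIV - {0::'a}"
  have "(\<Prod>y\<in>?U. y) = (\<Prod>y\<in>?U. x * y)"
    by (rule prod.reindex_bij_witness[where j = "\<lambda>y. y / x" and i = "\<lambda>y. x * y"])
      (use False in auto)
  also have "\<dots> = x ^ card ?U * (\<Prod>y\<in>?U. y)"
    by (simp add: prod.distrib)
  finally have "x ^ card ?U = 1"
    by simp
  have "card (UNIV :: 'a set) = Suc (card ?U)"
    using finite_UNIV_card_ge_0[where 'a = 'a] by (simp add: card_Diff_subset)
  then have "x ^ card (UNIV :: 'a set) = x * x ^ card ?U"
    by (simp only: power_Suc)
  with \<open>x ^ card ?U = 1\<close> show ?thesis
    by (simp only: mult_1_right)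
qed (simp add: finite_UNIV_card_ge_0)

lemma CHAR_eq_2_if_card_eq_power_2:
  assumes "card (UNIV :: 'a::{idom,finite} set) = 2 ^ k"
  shows "CHAR('a) = 2"
proof -
  have "prime CHAR('a)"
    by (rule prime_CHAR_semidom[OF finite_imp_CHAR_pos[OF finite_UNIV]])
  moreover have "CHAR('a) dvd 2 ^ k"
    using CHAR_dvd_CARD[where 'a = 'a] by (simp only: assms)
  ultimately have "CHAR('a) dvd 2"
    by (rule prime_dvd_power)
  with \<open>prime CHAR('a)\<close> show ?thesis
    by (rule primes_dvd_imp_eq[OF _ two_is_prime_nat])
qed

lemma alt_ip_Cons:
  "alt_ip q \<beta> (a # u) (b # v) = alt_ip q \<beta> [a] [b] + alt_ip q \<beta> u v"
  by (simp add: alt_ip_def sum.lessThan_Suc_shift distrib_left del: sum.lessThan_Suc)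

lemma alt_ip_append:
  assumes "length u = length v"
  shows "alt_ip q \<beta> (u @ u') (v @ v') = alt_ip q \<beta> u v + alt_ip q \<beta> u' v'"
  using assms
proof (induction u v rule: list_induct2)
  case Nil
  then show ?case by (simp add: alt_ip_def)
next
  case (Cons a u b v)
  then show ?case
    by (simp add: alt_ip_Cons[of q \<beta> a "u @ u'" b "v @ v'"] alt_ip_Cons[of q \<beta> a u b v] add.assoc)
qed

lemma length_conj_shift [simp]: "length (conj_shift q u) = length u"
  by (simp add: conj_shift_def)

lemma conj_shift_snoc [simp]: "conj_shift q (u @ [a]) = a ^ q # u"
  by (simp add: conj_shift_def)

lemma alt_ip_conj_shift:
  fixes u v :: "'a::field list"
  assumes "CHAR('a) = 2" and "\<And>x::'a. (x ^ q) ^ q = x" and "length u = length v"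
  shows "alt_ip q \<beta> (conj_shift q u) (conj_shift q v) = alt_ip q \<beta> u v"
proof (cases u rule: rev_exhaust)
  case Nil
  with assms(3) show ?thesis by (simp add: conj_shift_def)
next
  case (snoc u' a)
  with assms(3) obtain v' b where v: "v = v' @ [b]" and "length u' = length v'"
    by (cases v rule: rev_exhaust) auto
  have "alt_ip q \<beta> (conj_shift q u) (conj_shift q v) =
      alt_ip q \<beta> [a ^ q] [b ^ q] + alt_ip q \<beta> u' v'"
    using snoc v by (simp add: alt_ip_Cons[of q \<beta> "a ^ q" u' "b ^ q" v'])
  also have "alt_ip q \<beta> [a ^ q] [b ^ q] = alt_ip q \<beta> [a] [b]"
    by (simp add: alt_ip_def assms(2) minus_CHAR_2[OF assms(1)] add.commute mult.commute)
  also have "alt_ip q \<beta> [a] [b] + alt_ip q \<beta> u' v' = alt_ip q \<beta> u v"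
    using snoc v \<open>length u' = length v'\<close> by (simp add: alt_ip_append add.commute)
  finally show ?thesis .
qed

lemma alt_ip_add_right:
  fixes u v w :: "'a::field list"
  assumes "prime CHAR('a)" and "q = CHAR('a) ^ k"
    and "length v = length u" and "length w = length u"
  shows "alt_ip q \<beta> u (map2 (+) v w) = alt_ip q \<beta> u v + alt_ip q \<beta> u w"
proof -
  have "(x + y) ^ q = x ^ q + y ^ q" for x y :: 'a
    using freshmans_dream' assms(1,2) by blast
  then have "alt_ip q \<beta> u (map2 (+) v w) = (\<beta> ^ (2 * q) - \<beta> ^ 2) *
      (\<Sum>i<length u. (u ! i * v ! i ^ q - u ! i ^ q * v ! i) +
                       (u ! i * w ! i ^ q - u ! i ^ q * w ! i))"
    unfolding alt_ip_def using assms(3,4)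
    by (intro arg_cong2[where f = "(*)"] sum.cong) (auto simp: algebra_simps)
  then show ?thesis
    by (simp add: alt_ip_def sum.distrib distrib_left)
qed

lemma alt_ip_scale_right:
  fixes u v :: "'a::field list"
  assumes "a ^ q = a" and "length v = length u"
  shows "alt_ip q \<beta> u (map (\<lambda>x. a * x) v) = a * alt_ip q \<beta> u v"
proof -
  have "alt_ip q \<beta> u (map (\<lambda>x. a * x) v) = (\<beta> ^ (2 * q) - \<beta> ^ 2) *
      (\<Sum>i<length u. a * (u ! i * v ! i ^ q - u ! i ^ q * v ! i))"
    unfolding alt_ip_def using assms
    by (intro arg_cong2[where f = "(*)"] sum.cong) (auto simp: power_mult_distrib algebra_simps)
  then show ?thesis
    by (simp add: alt_ip_def sum_distrib_left mult.left_commute)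
qed

lemma alt_ip_replicate_zero_right:
  assumes "q > 0"
  shows "alt_ip q \<beta> u (replicate (length u) 0) = 0"
  using assms by (simp add: alt_ip_def zero_power)

lemma inj_conj_shift:
  assumes "inj (\<lambda>x::'a::field. x ^ q)"
  shows "inj (conj_shift q :: 'a list \<Rightarrow> 'a list)"
proof (rule injI)
  fix u v :: "'a list"
  assume eq: "conj_shift q u = conj_shift q v"
  then have "length u = length v"
    by (metis length_conj_shift)
  then show "u = v"
  proof (cases u rule: rev_exhaust)
    case (snoc u' a)
    with \<open>length u = length v\<close> obtain v' b where v: "v = v' @ [b]"
      by (cases v rule: rev_exhaust) auto
    with snoc eq have "a ^ q = b ^ q" and "u' = v'"
      by simp_all
    with snoc v show ?thesis
      using injD[OF assms] by simp
  qed simp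
qed

lemma Fq_linear_additive_code_alt_dual:
  fixes C :: "'a::field list set"
  assumes "prime CHAR('a)" and "q = CHAR('a) ^ k" and lengths: "C \<subseteq> {u. length u = n}"
  shows "Fq_linear_additive_code q n (alt_dual q \<beta> n C)"
  unfolding Fq_linear_additive_code_def
proof (intro conjI ballI)
  show "alt_dual q \<beta> n C \<subseteq> {v. length v = n}"
    by (auto simp: alt_dual_def)
  have "q > 0"
    using assms(1,2) by (simp add: prime_gt_0_nat)
  have "alt_ip q \<beta> u (replicate n 0) = 0" if "u \<in> C" for u
    using alt_ip_replicate_zero_right[OF \<open>q > 0\<close>, of \<beta> u] that lengths by auto
  then show "replicate n 0 \<in> alt_dual q \<beta> n C"
    by (simp add: alt_dual_def)
next
  fix v w
  assume v: "v \<in> alt_dual q \<beta> n C" and w: "w \<in> alt_dual q \<beta> n C"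
  have "alt_ip q \<beta> u (map2 (+) v w) = 0" if "u \<in> C" for u
    using v w that lengths by (auto simp: alt_dual_def alt_ip_add_right[OF assms(1,2)])
  with v w show "map2 (+) v w \<in> alt_dual q \<beta> n C"
    by (simp add: alt_dual_def)
next
  fix a :: 'a and v
  assume a: "a \<in> subfield_Fq q" and v: "v \<in> alt_dual q \<beta> n C"
  have "alt_ip q \<beta> u (map (\<lambda>x. a * x) v) = 0" if "u \<in> C" for u
    using a v that lengths by (auto simp: alt_dual_def subfield_Fq_def alt_ip_scale_right)
  with v show "map (\<lambda>x. a * x) v \<in> alt_dual q \<beta> n C"
    by (simp add: alt_dual_def)
qed

lemma conjucyclic_alt_dual:
  fixes C :: "'a::field list set"
  assumes char_2: "CHAR('a) = 2" and frobenius_involution: "\<And>x::'a. (x ^ q) ^ q = x"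
    and "finite C" and lengths: "C \<subseteq> {u. length u = n}" and "conjucyclic q C"
  shows "conjucyclic q (alt_dual q \<beta> n C)"
  unfolding conjucyclic_def
proof
  fix v
  assume v: "v \<in> alt_dual q \<beta> n C"
  have "inj (\<lambda>x::'a. x ^ q)"
    by (metis injI frobenius_involution)
  then have "conj_shift q ` C = C"
    using \<open>finite C\<close> \<open>conjucyclic q C\<close> inj_on_subset[OF inj_conj_shift subset_UNIV]
    by (intro endo_inj_surj) (auto simp: conjucyclic_def)
  have "alt_ip q \<beta> u (conj_shift q v) = 0" if "u \<in> C" for u
  proof -
    from \<open>u \<in> C\<close> \<open>conj_shift q ` C = C\<close> obtain w where "w \<in> C" and "u = conj_shift q w"
      by blast
    with v lengths have "alt_ip q \<beta> u (conj_shift q v) = alt_ip q \<beta> w v"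
      using alt_ip_conj_shift[OF char_2 frobenius_involution] by (auto simp: alt_dual_def)
    with \<open>w \<in> C\<close> v show ?thesis
      by (simp add: alt_dual_def)
  qed
  with v show "conj_shift q v \<in> alt_dual q \<beta> n C"
    by (simp add: alt_dual_def)
qed

theorem corollary4p7:
  fixes C :: "'a::{field,finite} list set" and q m n :: nat and \<beta> :: 'a
  assumes "q = 2 ^ m"
    and "card (UNIV :: 'a set) = q ^ 2"
    and "primitive_element \<beta>"
    and "Fq_linear_additive_code q n C"
    and "conjucyclic q C"
  shows "Fq_linear_additive_code q n (alt_dual q \<beta> n C) \<and> conjucyclic q (alt_dual q \<beta> n C)"
proof -
  have char_2: "CHAR('a) = 2"
    using assms(1,2) by (intro CHAR_eq_2_if_card_eq_power_2[where k = "m * 2"])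
      (simp add: power_mult)
  have frobenius_involution: "(x ^ q) ^ q = x" for x :: 'a
    using power_card_eq_self[of x] by (simp add: assms(2) power2_eq_square flip: power_mult)
  have lengths: "C \<subseteq> {u. length u = n}"
    using assms(4) by (simp add: Fq_linear_additive_code_def)
  have "finite C"
    by (rule finite_subset[OF _ finite_lists_length_eq[OF finite_UNIV, of n]])
      (use lengths in auto)
  show ?thesis
  proof
    show "Fq_linear_additive_code q n (alt_dual q \<beta> n C)"
      by (rule Fq_linear_additive_code_alt_dual[where k = m]) (simp_all add: char_2 assms(1) lengths)
    show "conjucyclic q (alt_dual q \<beta> n C)"
      by (rule conjucyclic_alt_dual[OF char_2 frobenius_involution \<open>finite C\<close> lengths assms(5)])
  qed
qed

end
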